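(* Let $Z$ and $V$ be real Banach spaces, let $D \subset Z$ be open, let $F: D \to V$, and let $r \in D$ satisfy $F(r) = 0$. Suppose $F$ is semismooth at $r$ with Newton derivative $H: D \to L(Z,V)$ on an open neighbourhood $N \subset D$ of $r$ (in the sense defined in the context). Further assume that $H(z)$ is invertible for every $z \in N$ and that $\{\|H(z)^{-1}\| : z \in N\}$ has a finite upper bound $\Gamma$. Let $p \ge 1$. Then each of the operators $$M(z;r) = \frac{\mathcal{I}_V}{\|z-r\|_Z^p} \qquad\text{and}\qquad M(z;r) = \left(\frac{1}{\|z-r\|_Z^p} + 1\right)\mathcal{I}_V, \qquad z \in Z\setminus\{r\},$$ where $\mathcal{I}_V$ is the identity map on $V$, is a deflation operator for $F$ at $r$; that is, $M(z;r) \in L(V,V)$ is invertible for all $z \neq r$ in a neighbourhood of $r$, and $$\liminf_{z \to r} \|M(z;r)F(z)\|_V > 0.$$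
   Context: Semismoothness: $F: D \subset Z \to V$ ($D$ open) is semismooth at $z \in D$ if it is locally Lipschitz continuous at $z$ and there exist an open neighbourhood $N \subset D$ containing $z$ and a mapping $H: D \to L(Z,V)$ (a Newton derivative) such that $F(w+h) - F(w) - H(w+h)h = o(\|h\|_Z)$ as $h \to 0$, for all $w \in N$. A deflation operator for $F$ at a root $r$ is a map $M(\cdot;r): Z\setminus\{r\} \to L(V,V)$ such that $M(z;r)$ is invertible for all $z \ne r$ in a neighbourhood of $r$ and $\liminf_{z\to r}\|M(z;r)F(z)\|_V > 0$. *)

theory Defs
  imports "HOL-Analysis.Analysis"
begin

definition is_blinfun_inverse ::
  "('b::real_normed_vector \<Rightarrow>\<^sub>L 'a::real_normed_vector) \<Rightarrow> ('a \<Rightarrow>\<^sub>L 'b) \<Rightarrow> bool" where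
  "is_blinfun_inverse S T \<longleftrightarrow> S o\<^sub>L T = id_blinfun \<and> T o\<^sub>L S = id_blinfun"

definition blinfun_invertible :: "('a::real_normed_vector \<Rightarrow>\<^sub>L 'b::real_normed_vector) \<Rightarrow> bool" where
  "blinfun_invertible T \<longleftrightarrow> (\<exists>S. is_blinfun_inverse S T)"

definition loc_lipschitz_at ::
  "'a::metric_space set \<Rightarrow> ('a \<Rightarrow> 'b::metric_space) \<Rightarrow> 'a \<Rightarrow> bool" where
  "loc_lipschitz_at D F z \<longleftrightarrow>
     (\<exists>U L. open U \<and> z \<in> U \<and> (\<forall>x\<in>U \<inter> D. \<forall>y\<in>U \<inter> D. dist (F x) (F y) \<le> L * dist x y))"

text \<open>H is a Newton derivative of F on N:
  F(w+h) - F(w) - H(w+h)h = o(\<parallel>h\<parallel>) as h \<rightarrow> 0, for all w \<in> N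
  (only h with w + h \<in> D are considered, F being defined on D).\<close>
definition newton_derivative_on ::
  "'a::real_normed_vector set \<Rightarrow> ('a \<Rightarrow> 'b::real_normed_vector) \<Rightarrow> ('a \<Rightarrow> ('a \<Rightarrow>\<^sub>L 'b)) \<Rightarrow> 'a set \<Rightarrow> bool" where
  "newton_derivative_on D F H N \<longleftrightarrow>
     (\<forall>w\<in>N. \<forall>e>0. \<exists>\<delta>>0. \<forall>h. w + h \<in> D \<and> norm h < \<delta> \<longrightarrow>
        norm (F (w + h) - F w - H (w + h) h) \<le> e * norm h)"

definition semismooth_at_with ::
  "'a::real_normed_vector set \<Rightarrow> ('a \<Rightarrow> 'b::real_normed_vector) \<Rightarrow> 'a \<Rightarrow> ('a \<Rightarrow> ('a \<Rightarrow>\<^sub>L 'b)) \<Rightarrow> 'a set \<Rightarrow> bool" where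
  "semismooth_at_with D F z H N \<longleftrightarrow>
     loc_lipschitz_at D F z \<and> open N \<and> z \<in> N \<and> N \<subseteq> D \<and> newton_derivative_on D F H N"

definition deflation_operator ::
  "('a::real_normed_vector \<Rightarrow> 'b::real_normed_vector) \<Rightarrow> 'a \<Rightarrow> ('a \<Rightarrow> ('b \<Rightarrow>\<^sub>L 'b)) \<Rightarrow> bool" where
  "deflation_operator F r M \<longleftrightarrow>
     (\<exists>U. open U \<and> r \<in> U \<and> (\<forall>z\<in>U - {r}. blinfun_invertible (M z))) \<and>
     Liminf (at r) (\<lambda>z. ereal (norm (M z (F z)))) > 0"

end

theory Submission
  imports Defs
begin

text \<open>Near the root r, the Newton derivative condition at r gives
  \<open>F z = H z (z - r) + o(\<parallel>z - r\<parallel>)\<close>, and the uniform bound \<Gamma> on \<open>\<parallel>H z\<inverse>\<parallel>\<close> turns this into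
  \<open>\<parallel>z - r\<parallel> \<le> 2\<Gamma> \<parallel>F z\<parallel>\<close>. Since \<open>\<parallel>z - r\<parallel>\<^sup>p \<le> \<parallel>z - r\<parallel>\<close> for \<open>\<parallel>z - r\<parallel> < 1\<close> and \<open>p \<ge> 1\<close>, both
  deflated residuals \<open>\<parallel>M(z;r) F z\<parallel>\<close> stay above a positive constant near r, while the
  operators, being nonzero multiples of the identity away from r, are invertible.\<close>

lemma blinfun_invertible_scaleR_id:
  fixes c :: real
  assumes "c \<noteq> 0"
  shows "blinfun_invertible (c *\<^sub>R (id_blinfun :: 'v::real_normed_vector \<Rightarrow>\<^sub>L 'v))"
  unfolding blinfun_invertible_def is_blinfun_inverse_def
  by (rule exI[of _ "inverse c *\<^sub>R id_blinfun"])
    (auto intro!: blinfun_eqI simp: assms scaleR_blinfun.rep_eq)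

lemma norm_le_norm_blinfun_inverse:
  assumes "is_blinfun_inverse S T"
  shows "norm x \<le> norm S * norm (T x)"
proof -
  have "x = S (T x)"
    using assms unfolding is_blinfun_inverse_def
    by (metis blinfun_apply_blinfun_compose blinfun_apply_id_blinfun)
  then show ?thesis by (metis norm_blinfun)
qed

lemma deflation_operator_scaleR_id:
  fixes F :: "'z::real_normed_vector \<Rightarrow> 'v::real_normed_vector"
  assumes nonzero: "\<And>z. z \<noteq> r \<Longrightarrow> a z \<noteq> 0"
    and "c > 0"
    and bound: "eventually (\<lambda>z. c \<le> \<bar>a z\<bar> * norm (F z)) (at r)"
  shows "deflation_operator F r (\<lambda>z. a z *\<^sub>R id_blinfun)"
  unfolding deflation_operator_def
proof
  show "\<exists>U. open U \<and> r \<in> U \<and> (\<forall>z\<in>U - {r}. blinfun_invertible (a z *\<^sub>R (id_blinfun :: 'v \<Rightarrow>\<^sub>L 'v)))"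
    using nonzero by (intro exI[of _ UNIV]) (auto intro: blinfun_invertible_scaleR_id)
  have "eventually (\<lambda>z. ereal c \<le> ereal (norm ((a z *\<^sub>R (id_blinfun :: 'v \<Rightarrow>\<^sub>L 'v)) (F z)))) (at r)"
    using bound by eventually_elim (simp add: scaleR_blinfun.rep_eq)
  then have "ereal c \<le> Liminf (at r) (\<lambda>z. ereal (norm ((a z *\<^sub>R (id_blinfun :: 'v \<Rightarrow>\<^sub>L 'v)) (F z))))"
    by (rule Liminf_bounded)
  then show "0 < Liminf (at r) (\<lambda>z. ereal (norm ((a z *\<^sub>R (id_blinfun :: 'v \<Rightarrow>\<^sub>L 'v)) (F z))))"
    using \<open>c > 0\<close> by (simp add: less_le_trans[of 0 "ereal c"])
qed

lemma newton_derivative_root_linear_growth: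
  fixes F :: "'z::real_normed_vector \<Rightarrow> 'v::real_normed_vector"
  assumes "F r = 0" and "open N" and "r \<in> N" and "N \<subseteq> D"
    and nd: "newton_derivative_on D F H N"
    and inv: "\<forall>z\<in>N. \<exists>S. is_blinfun_inverse S (H z) \<and> norm S \<le> \<Gamma>"
  shows "eventually (\<lambda>z. norm (z - r) \<le> 2 * \<Gamma> * norm (F z)) (at r)"
proof -
  define e where "e = 1 / (2 * max \<Gamma> 1)"
  have "e > 0" "\<Gamma> * e \<le> 1 / 2"
    unfolding e_def by (auto simp: field_simps)
  obtain \<delta> where "\<delta> > 0" and remainder: "\<And>h. r + h \<in> D \<Longrightarrow> norm h < \<delta> \<Longrightarrow>
      norm (F (r + h) - F r - H (r + h) h) \<le> e * norm h"
    using nd \<open>r \<in> N\<close> \<open>e > 0\<close> unfolding newton_derivative_on_def by blast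
  have "eventually (\<lambda>z. z \<in> N \<and> dist z r < \<delta>) (at r)"
    using \<open>open N\<close> \<open>r \<in> N\<close> \<open>\<delta> > 0\<close>
    by (intro eventually_conj eventually_at_in_open') (auto simp: eventually_at)
  then show ?thesis
  proof eventually_elim
    case (elim z)
    define h where "h = z - r"
    obtain S where S: "is_blinfun_inverse S (H z)" "norm S \<le> \<Gamma>"
      using inv elim by blast
    have "0 \<le> \<Gamma>" using S(2) norm_ge_zero order_trans by blast
    have "norm (F z - H z h) \<le> e * norm h"
      using remainder[of h] elim \<open>N \<subseteq> D\<close> \<open>F r = 0\<close> by (auto simp: h_def dist_norm)
    then have "norm (H z h) \<le> norm (F z) + e * norm h"
      using norm_triangle_ineq4[of "F z" "F z - H z h"] by simp
    have "norm h \<le> \<Gamma> * norm (H z h)"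
      using norm_le_norm_blinfun_inverse[OF S(1)] S(2)
      by (meson mult_right_mono norm_ge_zero order_trans)
    also have "\<dots> \<le> \<Gamma> * norm (F z) + (\<Gamma> * e) * norm h"
      using mult_left_mono[OF \<open>norm (H z h) \<le> _\<close> \<open>0 \<le> \<Gamma>\<close>] by (simp add: algebra_simps)
    also have "\<dots> \<le> \<Gamma> * norm (F z) + norm h / 2"
      using mult_right_mono[OF \<open>\<Gamma> * e \<le> 1 / 2\<close> norm_ge_zero[of h]] by simp
    finally show ?case unfolding h_def by simp
  qed
qed

theorem mainTheorem1:
  fixes F :: "'z::banach \<Rightarrow> 'v::banach"
    and H :: "'z \<Rightarrow> ('z \<Rightarrow>\<^sub>L 'v)"
    and D N :: "'z set" and r :: 'z and \<Gamma> p :: real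
  assumes "open D" and "r \<in> D" and "F r = 0"
    and "semismooth_at_with D F r H N"
    and "\<forall>z\<in>N. \<exists>S. is_blinfun_inverse S (H z) \<and> norm S \<le> \<Gamma>"
    and "p \<ge> 1"
  shows "deflation_operator F r (\<lambda>z. (1 / norm (z - r) powr p) *\<^sub>R id_blinfun)
    \<and> deflation_operator F r (\<lambda>z. (1 / norm (z - r) powr p + 1) *\<^sub>R id_blinfun)"
proof -
  define C where "C = 2 * max \<Gamma> 1"
  have "C > 0" unfolding C_def by simp
  have growth: "eventually (\<lambda>z. norm (z - r) \<le> 2 * \<Gamma> * norm (F z)) (at r)"
    using assms(3-5) unfolding semismooth_at_with_def
    by (intro newton_derivative_root_linear_growth[where N = N and D = D and H = H]) auto
  have "eventually (\<lambda>z. z \<noteq> r \<and> norm (z - r) < 1) (at r)"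
    unfolding eventually_at by (rule exI[of _ 1]) (simp add: dist_norm)
  with growth have residual: "eventually (\<lambda>z. 1 / C \<le> \<bar>1 / norm (z - r) powr p\<bar> * norm (F z)) (at r)"
  proof eventually_elim
    case (elim z)
    have "norm (z - r) powr p \<le> norm (z - r)"
      using powr_mono'[of 1 p "norm (z - r)"] elim \<open>p \<ge> 1\<close> by auto
    also have "\<dots> \<le> C * norm (F z)"
      using elim unfolding C_def by (smt (verit) mult_right_mono norm_ge_zero)
    finally show ?case using elim \<open>C > 0\<close> by (simp add: field_simps)
  qed
  show ?thesis
  proof
    show "deflation_operator F r (\<lambda>z. (1 / norm (z - r) powr p) *\<^sub>R id_blinfun)"
      using residual \<open>C > 0\<close> by (intro deflation_operator_scaleR_id) auto
    have "eventually (\<lambda>z. 1 / C \<le> \<bar>1 / norm (z - r) powr p + 1\<bar> * norm (F z)) (at r)"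
      using residual
    proof eventually_elim
      case (elim z)
      have "\<bar>1 / norm (z - r) powr p\<bar> \<le> \<bar>1 / norm (z - r) powr p + 1\<bar>" by simp
      with elim show ?case by (meson mult_right_mono norm_ge_zero order_trans)
    qed
    then show "deflation_operator F r (\<lambda>z. (1 / norm (z - r) powr p + 1) *\<^sub>R id_blinfun)"
      using \<open>C > 0\<close> by (intro deflation_operator_scaleR_id) (auto simp: add_nonneg_eq_0_iff)
  qed
qed

end
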